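(* For $d \ge 1$, let $X$ and $Y$ be independent random vectors uniformly distributed on the closed unit ball $B(0,1)$ of $\mathbb{R}^d$, and let $w_d = \mathbb{P}\{\|X - Y\| \le 1\}$ (Euclidean norm). Then $$w_d = \frac{3}{2}\, \mathbb{P}\left\{ \beta\left(\tfrac12, \tfrac{d+1}{2}\right) \ge \tfrac14 \right\},$$ where $\beta(a,b)$ denotes a beta random variable with shape parameters $a,b$. Moreover, the sequence $(w_d)_{d\ge1}$ is strictly decreasing and $w_d \to 0$ as $d \to \infty$. *)

theory Defs
  imports "HOL-Probability.Probability"
begin

text \<open>Lebesgue measure on R^d, with R^d represented as functions on the index set {..<d}
  (PiM gives the value undefined outside the index set).\<close>
definition lebesgue_d :: "nat \<Rightarrow> (nat \<Rightarrow> real) measure" where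
  "lebesgue_d d = PiM {..<d} (\<lambda>_. lborel)"

definition enorm_d :: "nat \<Rightarrow> (nat \<Rightarrow> real) \<Rightarrow> real" where
  "enorm_d d x = sqrt (\<Sum>i<d. (x i)^2)"

definition unit_ball_d :: "nat \<Rightarrow> (nat \<Rightarrow> real) set" where
  "unit_ball_d d = {x \<in> space (lebesgue_d d). enorm_d d x \<le> 1}"

definition unif_ball :: "nat \<Rightarrow> (nat \<Rightarrow> real) measure" where
  "unif_ball d = uniform_measure (lebesgue_d d) (unit_ball_d d)"

definition w :: "nat \<Rightarrow> real" where
  "w d = measure (unif_ball d \<Otimes>\<^sub>M unif_ball d)
     {(x, y) \<in> space (unif_ball d \<Otimes>\<^sub>M unif_ball d). enorm_d d (\<lambda>i. x i - y i) \<le> 1}"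

definition beta_density :: "real \<Rightarrow> real \<Rightarrow> real \<Rightarrow> real" where
  "beta_density a b t =
     (if 0 < t \<and> t < 1 then t powr (a - 1) * (1 - t) powr (b - 1) / Beta a b else 0)"

definition beta_distr :: "real \<Rightarrow> real \<Rightarrow> real measure" where
  "beta_distr a b = density lborel (\<lambda>t. ennreal (beta_density a b t))"

end

theory Submission
  imports Defs
begin

text \<open>
  Write \<open>J\<^sub>n(a) = \<integral>\<^sub>a\<^sup>1 (1 - t\<^sup>2)\<^bsup>n/2\<^esup> dt\<close>, so that \<open>V\<^sub>n J\<^sub>n(a)\<close> is the volume of the cap
  \<open>{y \<in> B. y\<^sub>n \<ge> a}\<close> of the unit ball \<open>B\<close> of \<open>\<real>\<^sup>n\<^sup>+\<^sup>1\<close> (Cavalieri), where \<open>V\<^sub>n\<close> is the volume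
  of the unit ball of \<open>\<real>\<^sup>n\<close>. For \<open>x \<in> B\<close> with \<open>\<bar>x\<bar> = r\<close>, the hyperplane bisecting \<open>0\<close> and \<open>x\<close>
  cuts the lens \<open>{y \<in> B. \<bar>x - y\<bar> \<le> 1}\<close> into a cap and the mirror image of a cap, so by
  rotation invariance the lens has volume \<open>2 V\<^sub>n J\<^sub>n(r/2)\<close>. The norm of a uniform point of
  \<open>B\<close> has density \<open>(n+1) r\<^sup>n\<close> on \<open>[0,1]\<close>, and an integration by parts gives
  \<open>w\<^sub>n\<^sub>+\<^sub>1 = 3/2 \<cdot> J\<^sub>n(1/2) / J\<^sub>n(0)\<close>; the substitution \<open>t = u\<^sup>2\<close> identifies this ratio with
  the beta tail probability.

  Passing from \<open>n\<close> to \<open>n + 1\<close> multiplies the integrand by \<open>\<surd>(1 - t\<^sup>2)\<close>, which is at least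
  \<open>\<surd>(3/4)\<close> on \<open>[0, 1/2]\<close> and at most \<open>\<surd>(3/4)\<close> on \<open>[1/2, 1]\<close>: mass moves towards the
  centre, so the ratio decreases strictly; comparing the integrand near \<open>0\<close> and near \<open>1\<close>
  bounds it by \<open>2 (4/5)\<^bsup>n/2\<^esup>\<close>.
\<close>

section \<open>Sections and caps of the unit ball\<close>

text \<open>\<open>unit_ball_vol n * slice_profile n t\<close> is the volume of the section at height \<open>t\<close> of the
  unit ball of \<open>\<real>\<^sup>n\<^sup>+\<^sup>1\<close>, and \<open>cap_integral n\<close> is \<open>J\<^sub>n\<close>; it is meaningful only for \<open>-1 \<le> a\<close>,
  since below \<open>-1\<close> the integrand takes \<open>sqrt\<close> of negative numbers.\<close>

definition slice_profile :: "nat \<Rightarrow> real \<Rightarrow> real" where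
  "slice_profile n t = sqrt (1 - t\<^sup>2) ^ n"

definition cap_integral :: "nat \<Rightarrow> real \<Rightarrow> real" where
  "cap_integral n a = integral {a..1} (slice_profile n)"

lemma continuous_on_slice_profile [continuous_intros]: "continuous_on S (slice_profile n)"
  unfolding slice_profile_def by (intro continuous_intros)

lemma slice_profile_measurable [measurable]: "slice_profile n \<in> borel_measurable borel"
  by (intro borel_measurable_continuous_onI continuous_on_slice_profile)

lemma slice_profile_integrable [intro]: "slice_profile n integrable_on {a..b}"
  by (intro integrable_continuous_real continuous_intros)

lemma slice_profile_nonneg: "\<bar>t\<bar> \<le> 1 \<Longrightarrow> 0 \<le> slice_profile n t"
  unfolding slice_profile_def by (simp add: abs_square_le_1)

lemma slice_profile_pos: "\<bar>t\<bar> < 1 \<Longrightarrow> 0 < slice_profile n t"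
  unfolding slice_profile_def by (simp add: abs_square_less_1)

lemma slice_profile_Suc: "slice_profile (Suc n) t = sqrt (1 - t\<^sup>2) * slice_profile n t"
  by (simp add: slice_profile_def)

lemma slice_profile_antimono:
  assumes "0 \<le> s" "s \<le> t" "t \<le> 1"
  shows "slice_profile n t \<le> slice_profile n s"
  unfolding slice_profile_def using assms
  by (intro power_mono real_sqrt_le_mono) (auto simp: power_mono abs_square_le_1)

lemma slice_profile_chord: "0 \<le> s \<Longrightarrow> slice_profile n (1 - s\<^sup>2 / 2) = s ^ n * slice_profile n (s / 2)"
proof -
  assume "0 \<le> s"
  moreover have "1 - (1 - s\<^sup>2 / 2)\<^sup>2 = s\<^sup>2 * (1 - (s / 2)\<^sup>2)"
    by (simp add: power2_eq_square field_simps)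
  ultimately show ?thesis
    unfolding slice_profile_def by (simp add: real_sqrt_mult power_mult_distrib)
qed

lemma has_integral_cap_integral: "(slice_profile n has_integral cap_integral n a) {a..1}"
  unfolding cap_integral_def by (intro integrable_integral slice_profile_integrable)

lemma cap_integral_split:
  "a \<le> b \<Longrightarrow> b \<le> 1 \<Longrightarrow> cap_integral n a = integral {a..b} (slice_profile n) + cap_integral n b"
  unfolding cap_integral_def by (rule Henstock_Kurzweil_Integration.integral_combine[symmetric]) auto

lemma cap_integral_nonneg: "-1 \<le> a \<Longrightarrow> 0 \<le> cap_integral n a"
  unfolding cap_integral_def by (intro integral_nonneg slice_profile_integrable slice_profile_nonneg) auto

lemma cap_integral_pos:
  assumes "-1 \<le> a" "a < 1"
  shows "0 < cap_integral n a"
proof -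
  have "\<bar>t\<bar> < 1" if "a < t" "t < 1" for t
    using assms that by auto
  then show ?thesis
    unfolding cap_integral_def using assms integral_less[of a 1 "\<lambda>_. 0" "slice_profile n"]
    by (simp add: continuous_on_slice_profile slice_profile_pos)
qed

lemma cap_integral_eq_0: "1 \<le> a \<Longrightarrow> cap_integral n a = 0"
  using has_integral_unique[OF has_integral_cap_integral has_integral_null_real] by simp

lemma continuous_cap_integral: "continuous_on UNIV (cap_integral n)"
proof -
  have "continuous_on {c..c'} (cap_integral n)" if "c \<le> 1" "1 \<le> c'" for c c'
  proof -
    have "continuous_on {c..1} (cap_integral n)"
      unfolding cap_integral_def by (intro indefinite_integral_continuous_1' slice_profile_integrable)
    moreover have "continuous_on {1..c'} (cap_integral n)"
      by (rule continuous_on_eq[OF continuous_on_const[of _ 0]]) (simp add: cap_integral_eq_0)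
    ultimately show ?thesis
      using continuous_on_closed_Un[of "{c..1}" "{1..c'}" "cap_integral n"] that
      by (simp add: ivl_disj_un_two_touch)
  qed
  then have "isCont (cap_integral n) x" for x
    by (intro continuous_on_interior[of "{min x 1 - 1..max x 1 + 1}"]) auto
  then show ?thesis
    by (simp add: continuous_at_imp_continuous_on)
qed

lemma continuous_on_cap_integral [continuous_intros]:
  "continuous_on S f \<Longrightarrow> continuous_on S (\<lambda>x. cap_integral n (f x))"
  using continuous_on_compose2[OF continuous_cap_integral] by blast

lemma cap_integral_measurable [measurable]: "cap_integral n \<in> borel_measurable borel"
  by (intro borel_measurable_continuous_onI continuous_cap_integral)

lemma cap_integral_has_derivative:
  assumes "-1 < a" "a < 1"
  shows "(cap_integral n has_real_derivative - slice_profile n a) (at a)"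
proof -
  have "(cap_integral n has_real_derivative - slice_profile n a) (at a within {-1..1})"
    unfolding cap_integral_def using assms
    by (intro integral_has_real_derivative' continuous_intros) auto
  moreover have "at a within {-1..1} = at a"
    using assms by (intro at_within_interior) auto
  ultimately show ?thesis by simp
qed

lemma has_integral_weighted_cap_integral:
  "((\<lambda>s. real (Suc n) * s ^ n * cap_integral n (s / 2)) has_integral 3 / 2 * cap_integral n (1 / 2)) {0..1}"
proof -
  \<comment> \<open>Found by integrating by parts; by \<open>slice_profile_chord\<close> the two terms of \<open>F'\<close>
    involving \<open>slice_profile\<close> cancel.\<close>
  define F where "F s = s ^ Suc n * cap_integral n (s / 2) + cap_integral n (1 - s\<^sup>2 / 2) / 2" for s
  have "((\<lambda>s. real (Suc n) * s ^ n * cap_integral n (s / 2)) has_integral F 1 - F 0) {0..1}"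
  proof (rule fundamental_theorem_of_calculus_interior)
    show "continuous_on {0..1} F"
      unfolding F_def by (intro continuous_intros) auto
  next
    fix s :: real assume s: "s \<in> {0<..<1}"
    have "0 < s\<^sup>2" "s\<^sup>2 < 1" using s by (auto simp: abs_square_less_1)
    then have "(F has_real_derivative real (Suc n) * s ^ n * cap_integral n (s / 2)) (at s)"
      unfolding F_def using s power_minus_mult[of n s]
      by (auto intro!: derivative_eq_intros DERIV_chain2[OF cap_integral_has_derivative]
          simp: slice_profile_chord algebra_simps)
    then show "(F has_vector_derivative real (Suc n) * s ^ n * cap_integral n (s / 2)) (at s)"
      by (simp add: has_real_derivative_iff_has_vector_derivative)
  qed simp
  moreover have "F 1 - F 0 = 3 / 2 * cap_integral n (1 / 2)"
    unfolding F_def by (simp add: cap_integral_def)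
  ultimately show ?thesis by simp
qed

section \<open>The beta distribution\<close>

lemma has_integral_beta_kernel_cap_integral:
  assumes "0 \<le> a" "a \<le> 1"
  shows "((\<lambda>t. t powr (-1/2) * (1 - t) powr (real n / 2)) has_integral 2 * cap_integral n (sqrt a)) {a..1}"
proof -
  have "((\<lambda>t. t powr (-1/2) * (1 - t) powr (real n / 2)) has_integral
      (- 2 * cap_integral n (sqrt 1)) - (- 2 * cap_integral n (sqrt a))) {a..1}"
  proof (rule fundamental_theorem_of_calculus_interior)
    show "continuous_on {a..1} (\<lambda>t. - 2 * cap_integral n (sqrt t))"
      by (intro continuous_intros)
  next
    fix t :: real assume t: "t \<in> {a<..<1}"
    then have "0 < t" "t < 1" using assms by auto
    moreover have "-1 < sqrt t" using \<open>0 < t\<close> real_sqrt_gt_zero[of t] by linarith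
    ultimately have "((\<lambda>t. - 2 * cap_integral n (sqrt t)) has_real_derivative
        - 2 * (- slice_profile n (sqrt t) * (inverse (sqrt t) / 2))) (at t)"
      by (intro DERIV_cmult DERIV_chain2[OF cap_integral_has_derivative] DERIV_real_sqrt) auto
    moreover have "- 2 * (- slice_profile n (sqrt t) * (inverse (sqrt t) / 2)) =
        t powr (-1/2) * (1 - t) powr (real n / 2)"
      using \<open>0 < t\<close> \<open>t < 1\<close>
      by (simp add: slice_profile_def powr_minus powr_half_sqrt powr_half_sqrt_powr powr_realpow
          real_sqrt_power)
    ultimately show "((\<lambda>t. - 2 * cap_integral n (sqrt t)) has_vector_derivative
        t powr (-1/2) * (1 - t) powr (real n / 2)) (at t)"
      by (simp add: has_real_derivative_iff_has_vector_derivative)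
  qed (use assms in auto)
  then show ?thesis by (simp add: cap_integral_def)
qed

lemma Beta_half_eq_cap_integral: "Beta (1/2) (real n / 2 + 1) = 2 * cap_integral n 0"
proof -
  have "((\<lambda>t. t powr (-1/2) * (1 - t) powr (real n / 2)) has_integral Beta (1/2) (real n / 2 + 1)) {0..1}"
    using has_integral_Beta_real[of "1/2" "real n / 2 + 1"] by simp
  then show ?thesis
    using has_integral_unique has_integral_beta_kernel_cap_integral[of 0 n] by auto
qed

lemma unit_ball_vol_Suc:
  "unit_ball_vol (real (Suc n)) = 2 * unit_ball_vol (real n) * cap_integral n 0"
proof -
  have "unit_ball_vol (real (Suc n)) = unit_ball_vol (real n) * Beta (1/2) (real n / 2 + 1)"
    by (auto simp: unit_ball_vol_def Beta_def Gamma_eq_zero_iff field_simps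
        Gamma_one_half_real powr_half_sqrt [symmetric] powr_add [symmetric])
  then show ?thesis by (simp add: Beta_half_eq_cap_integral)
qed

lemma measure_beta_distr_tail:
  assumes "0 \<le> a" "a \<le> 1"
  shows "measure (beta_distr (1/2) (real n / 2 + 1)) {a..} = cap_integral n (sqrt a) / cap_integral n 0"
proof -
  define B where "B = Beta (1/2) (real n / 2 + 1)"
  have "0 < B" "B = 2 * cap_integral n 0"
    using cap_integral_pos[of 0 n] by (simp_all add: B_def Beta_half_eq_cap_integral)
  have "emeasure (beta_distr (1/2) (real n / 2 + 1)) {a..} =
      (\<integral>\<^sup>+t. ennreal (beta_density (1/2) (real n / 2 + 1) t) * indicator {a..} t \<partial>lborel)"
    unfolding beta_distr_def beta_density_def by (rule emeasure_density) auto
  also have "\<dots> = (\<integral>\<^sup>+t. ennreal (t powr (-1/2) * (1 - t) powr (real n / 2) / B) * indicator {a..1} t \<partial>lborel)"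
  proof (intro nn_integral_cong)
    fix t :: real
    show "ennreal (beta_density (1/2) (real n / 2 + 1) t) * indicator {a..} t =
        ennreal (t powr (-1/2) * (1 - t) powr (real n / 2) / B) * indicator {a..1} t"
      using assms by (cases "t = 0") (auto simp: beta_density_def B_def indicator_def)
  qed
  also have "\<dots> = ennreal (2 * cap_integral n (sqrt a) / B)"
    using \<open>0 < B\<close> assms
    by (intro nn_integral_has_integral_lebesgue' has_integral_divide has_integral_beta_kernel_cap_integral)
      auto
  finally show ?thesis
    using \<open>0 < B\<close> \<open>B = 2 * cap_integral n 0\<close> cap_integral_nonneg[of "sqrt a" n]
      real_sqrt_ge_zero[OF assms(1)]
    by (simp add: measure_def)
qed

section \<open>The cap ratio\<close>

definition cap_ratio :: "nat \<Rightarrow> real" where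
  "cap_ratio n = cap_integral n (1/2) / cap_integral n 0"

lemma fraction_less_of_mass_shift:
  fixes A B A' B' c :: real
  assumes "0 \<le> A" "0 < B" "0 \<le> B'" "B' \<le> c * B" "c * A < A'"
  shows "B' / (A' + B') < B / (A + B)"
proof -
  have "0 \<le> c * B"
    using assms(3,4) by linarith
  then have "0 \<le> c"
    using assms(2) by (simp add: zero_le_mult_iff)
  then have "0 < A'"
    using assms(1,5) by (meson mult_nonneg_nonneg order.strict_trans1)
  have "B' * A \<le> B * (c * A)"
    using mult_right_mono[OF assms(4,1)] by (simp add: algebra_simps)
  also have "\<dots> < B * A'"
    using assms(2,5) by simp
  finally show ?thesis
    using assms(1-3) \<open>0 < A'\<close> by (simp add: field_simps)
qed

lemma cap_integral_Suc_half_le: "cap_integral (Suc n) (1/2) \<le> sqrt (3/4) * cap_integral n (1/2)"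
proof -
  have c: "sqrt (3/4) = sqrt (1 - (1/2 :: real)\<^sup>2)"
    by (simp add: power2_eq_square)
  have le: "slice_profile (Suc n) t \<le> sqrt (3/4) * slice_profile n t" if "t \<in> {1/2..1}" for t
  proof -
    have "sqrt (1 - t\<^sup>2) \<le> sqrt (3/4)" "0 \<le> slice_profile n t"
      using that unfolding c by (auto intro!: power_mono slice_profile_nonneg)
    then show ?thesis
      unfolding slice_profile_Suc by (rule mult_right_mono)
  qed
  have "integral {1/2..1} (slice_profile (Suc n)) \<le> integral {1/2..1} (\<lambda>t. sqrt (3/4) * slice_profile n t)"
    by (rule integral_le[OF slice_profile_integrable _ le]) (intro integrable_continuous_real continuous_intros)
  then show ?thesis
    by (simp add: cap_integral_def)
qed

lemma integral_slice_profile_Suc_gt: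
  "sqrt (3/4) * integral {0..1/2} (slice_profile n) < integral {0..1/2} (slice_profile (Suc n))"
proof -
  have c: "sqrt (3/4) = sqrt (1 - (1/2 :: real)\<^sup>2)"
    by (simp add: power2_eq_square)
  have "sqrt (3/4) * slice_profile n t < slice_profile (Suc n) t" if "0 < t" "t < 1/2" for t
  proof -
    have "sqrt (3/4) < sqrt (1 - t\<^sup>2)" "0 < slice_profile n t"
      using that unfolding c by (auto intro!: power_strict_mono slice_profile_pos)
    then show ?thesis
      unfolding slice_profile_Suc by (rule mult_strict_right_mono)
  qed
  then show ?thesis
    using integral_less[of 0 "1/2::real" "\<lambda>t. sqrt (3/4) * slice_profile n t"]
    by (simp add: continuous_on_slice_profile continuous_on_mult_left)
qed

lemma cap_ratio_Suc_less: "cap_ratio (Suc n) < cap_ratio n"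
proof -
  have "0 \<le> integral {0..1/2} (slice_profile n)"
    by (intro integral_nonneg slice_profile_integrable slice_profile_nonneg) auto
  then have "cap_integral (Suc n) (1/2) / (integral {0..1/2} (slice_profile (Suc n)) + cap_integral (Suc n) (1/2))
      < cap_integral n (1/2) / (integral {0..1/2} (slice_profile n) + cap_integral n (1/2))"
    by (intro fraction_less_of_mass_shift[OF _ _ _ cap_integral_Suc_half_le integral_slice_profile_Suc_gt])
      (auto intro: cap_integral_pos cap_integral_nonneg)
  then show ?thesis
    using cap_integral_split[of 0 "1/2"] unfolding cap_ratio_def by simp
qed

lemma cap_ratio_le: "cap_ratio n \<le> 2 * sqrt (4/5) ^ n"
proof -
  have "cap_integral n (1/2) \<le> integral {1/2..1::real} (\<lambda>_. slice_profile n (1/2))"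
    unfolding cap_integral_def
    by (intro integral_le slice_profile_integrable slice_profile_antimono integrable_const_ivl) auto
  also have "\<dots> = 1/2 * sqrt (3/4) ^ n"
    by (simp add: slice_profile_def power2_eq_square)
  finally have num: "cap_integral n (1/2) \<le> 1/2 * sqrt (3/4) ^ n" .
  have "1/4 * sqrt (15/16) ^ n = integral {0..1/4::real} (\<lambda>_. slice_profile n (1/4))"
    by (simp add: slice_profile_def power2_eq_square)
  also have "\<dots> \<le> integral {0..1/4} (slice_profile n)"
    by (intro integral_le slice_profile_integrable slice_profile_antimono integrable_const_ivl) auto
  also have "\<dots> \<le> cap_integral n 0"
    using cap_integral_split[of 0 "1/4" n] cap_integral_nonneg[of "1/4" n] by simp
  finally have den: "1/4 * sqrt (15/16) ^ n \<le> cap_integral n 0" .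
  have "cap_ratio n \<le> (1/2 * sqrt (3/4) ^ n) / (1/4 * sqrt (15/16) ^ n)"
    unfolding cap_ratio_def using num den cap_integral_nonneg[of "1/2" n] by (intro frac_le) auto
  also have "\<dots> = 2 * (sqrt (3/4) / sqrt (15/16)) ^ n"
    by (simp add: power_divide)
  also have "sqrt (3/4) / sqrt (15/16) = sqrt (4/5 :: real)"
    by (simp add: real_sqrt_divide [symmetric])
  finally show ?thesis .
qed

lemma cap_ratio_tendsto_zero: "cap_ratio \<longlonglongrightarrow> 0"
proof (rule real_tendsto_sandwich)
  show "\<forall>\<^sub>F n in sequentially. 0 \<le> cap_ratio n"
    by (simp add: cap_ratio_def cap_integral_nonneg)
  show "\<forall>\<^sub>F n in sequentially. cap_ratio n \<le> 2 * sqrt (4/5) ^ n"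
    by (simp add: cap_ratio_le)
  show "(\<lambda>n. 2 * sqrt (4/5) ^ n) \<longlonglongrightarrow> (0 :: real)"
    using tendsto_mult_right_zero[OF LIMSEQ_power_zero[of "sqrt (4/5)"]] by simp
qed simp

section \<open>Volume-preserving and orthogonal maps of \<open>\<real>\<^sup>d\<close>\<close>

lemma product_sigma_finite_lborel: "product_sigma_finite (\<lambda>_::nat. lborel :: real measure)"
  by (simp add: product_sigma_finite_def lborel.sigma_finite_measure_axioms)

lemma space_lebesgue_d: "space (lebesgue_d d) = PiE {..<d} (\<lambda>_. UNIV)"
  by (simp add: lebesgue_d_def space_PiM)

lemma measurable_component_lebesgue_d: "i < d \<Longrightarrow> (\<lambda>y. y i) \<in> borel_measurable (lebesgue_d d)"
  unfolding lebesgue_d_def by simp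

lemma enorm_d_nonneg: "0 \<le> enorm_d d x"
  by (simp add: enorm_d_def sum_nonneg)

lemma enorm_d_measurable [measurable]: "enorm_d d \<in> borel_measurable (lebesgue_d d)"
  unfolding enorm_d_def lebesgue_d_def by measurable

lemma unit_ball_d_sets [measurable]: "unit_ball_d d \<in> sets (lebesgue_d d)"
  unfolding unit_ball_d_def by measurable

lemma unit_ball_vol_nonzero [simp]: "0 \<le> n \<Longrightarrow> unit_ball_vol n \<noteq> 0"
  using unit_ball_vol_pos[of n] by linarith

lemma emeasure_unit_ball_d: "emeasure (lebesgue_d d) (unit_ball_d d) = unit_ball_vol (real d)"
proof -
  have "unit_ball_d d = {f. sqrt (\<Sum>i\<in>{..<d}. (f i)\<^sup>2) \<le> 1} \<inter> space (PiM {..<d} (\<lambda>_. lborel))"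
    unfolding unit_ball_d_def enorm_d_def lebesgue_d_def by auto
  then show ?thesis
    unfolding lebesgue_d_def using emeasure_cball_aux[of "{..<d}" 1] by simp
qed

definition inner_d :: "nat \<Rightarrow> (nat \<Rightarrow> real) \<Rightarrow> (nat \<Rightarrow> real) \<Rightarrow> real" where
  "inner_d d x y = (\<Sum>i<d. x i * y i)"

lemma enorm_d_eq_sqrt_inner_d: "enorm_d d x = sqrt (inner_d d x x)"
  unfolding enorm_d_def inner_d_def by (simp add: power2_eq_square)

lemma mem_unit_ball_d_iff: "y \<in> unit_ball_d d \<longleftrightarrow> y \<in> space (lebesgue_d d) \<and> inner_d d y y \<le> 1"
  unfolding unit_ball_d_def enorm_d_eq_sqrt_inner_d by auto

lemma inner_d_diff_right: "inner_d d z (\<lambda>i. x i - y i) = inner_d d z x - inner_d d z y"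
  unfolding inner_d_def by (simp add: algebra_simps sum_subtractf)

lemma inner_d_diff_diff:
  "inner_d d (\<lambda>i. x i - y i) (\<lambda>i. x i - y i) = inner_d d x x - 2 * inner_d d x y + inner_d d y y"
  unfolding inner_d_def
  by (simp add: algebra_simps sum.distrib sum_subtractf sum_distrib_left power2_eq_square)

lemma inner_d_cong:
  "(\<And>i. i < d \<Longrightarrow> x i = x' i) \<Longrightarrow> (\<And>i. i < d \<Longrightarrow> y i = y' i) \<Longrightarrow> inner_d d x y = inner_d d x' y'"
  unfolding inner_d_def by (intro sum.cong) auto

definition volume_preserving_d :: "nat \<Rightarrow> ((nat \<Rightarrow> real) \<Rightarrow> (nat \<Rightarrow> real)) \<Rightarrow> bool" where
  "volume_preserving_d d T \<longleftrightarrow>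
     T \<in> lebesgue_d d \<rightarrow>\<^sub>M lebesgue_d d \<and> distr (lebesgue_d d) (lebesgue_d d) T = lebesgue_d d"

lemma volume_preserving_d_comp:
  assumes "volume_preserving_d d T" "volume_preserving_d d S"
  shows "volume_preserving_d d (\<lambda>y. S (T y))"
proof -
  have "distr (lebesgue_d d) (lebesgue_d d) (S \<circ> T) =
      distr (distr (lebesgue_d d) (lebesgue_d d) T) (lebesgue_d d) S"
    using assms unfolding volume_preserving_d_def by (intro distr_distr[symmetric]) auto
  then show ?thesis
    using assms measurable_comp unfolding volume_preserving_d_def comp_def by fastforce
qed

lemma emeasure_vimage_volume_preserving_d:
  assumes "volume_preserving_d d T" "A \<in> sets (lebesgue_d d)"
  shows "emeasure (lebesgue_d d) (T -` A \<inter> space (lebesgue_d d)) = emeasure (lebesgue_d d) A"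
  using assms emeasure_distr[of T "lebesgue_d d" "lebesgue_d d" A]
  unfolding volume_preserving_d_def by simp

lemma volume_preserving_dI:
  assumes T: "T \<in> lebesgue_d d \<rightarrow>\<^sub>M lebesgue_d d"
    and nn: "\<And>f. f \<in> borel_measurable (lebesgue_d d) \<Longrightarrow>
      (\<integral>\<^sup>+y. f (T y) \<partial>lebesgue_d d) = (\<integral>\<^sup>+y. f y \<partial>lebesgue_d d)"
  shows "volume_preserving_d d T"
  unfolding volume_preserving_d_def
proof (intro conjI T measure_eqI)
  fix A assume "A \<in> sets (distr (lebesgue_d d) (lebesgue_d d) T)"
  then have A: "A \<in> sets (lebesgue_d d)" by simp
  have "emeasure (distr (lebesgue_d d) (lebesgue_d d) T) A =
      (\<integral>\<^sup>+y. indicator A y \<partial>distr (lebesgue_d d) (lebesgue_d d) T)"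
    using A by simp
  also have "\<dots> = (\<integral>\<^sup>+y. indicator A (T y) \<partial>lebesgue_d d)"
    using A T by (intro nn_integral_distr) auto
  also have "\<dots> = emeasure (lebesgue_d d) A"
    using A by (simp add: nn)
  finally show "emeasure (distr (lebesgue_d d) (lebesgue_d d) T) A = emeasure (lebesgue_d d) A" .
qed simp

lemma measurable_update_lebesgue_d:
  assumes "i < d" "g \<in> borel_measurable (lebesgue_d d)"
  shows "(\<lambda>y. y(i := g y)) \<in> lebesgue_d d \<rightarrow>\<^sub>M lebesgue_d d"
  unfolding lebesgue_d_def
proof (rule measurable_PiM_single')
  fix k assume "k \<in> {..<d}"
  then show "(\<lambda>y. (y(i := g y)) k) \<in> PiM {..<d} (\<lambda>_. lborel) \<rightarrow>\<^sub>M lborel"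
    using assms(2) unfolding lebesgue_d_def by (cases "k = i") auto
qed (use assms(1) in \<open>auto simp: space_PiM PiE_def extensional_def\<close>)

lemma volume_preserving_d_update_affine:
  assumes i: "i < d" and a: "\<bar>a\<bar> = 1" and g: "g \<in> borel_measurable (lebesgue_d d)"
    and g_indep: "\<And>y u. g (y(i := u)) = g y"
  shows "volume_preserving_d d (\<lambda>y. y(i := a * y i + g y))"
proof (rule volume_preserving_dI)
  interpret product_sigma_finite "\<lambda>_::nat. lborel :: real measure"
    by (rule product_sigma_finite_lborel)
  have "(\<lambda>y. y i) \<in> borel_measurable (lebesgue_d d)"
    using i by (rule measurable_component_lebesgue_d)
  then show T: "(\<lambda>y. y(i := a * y i + g y)) \<in> lebesgue_d d \<rightarrow>\<^sub>M lebesgue_d d"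
    using i g by (intro measurable_update_lebesgue_d borel_measurable_add borel_measurable_times) auto
  fix f :: "(nat \<Rightarrow> real) \<Rightarrow> ennreal" assume f: "f \<in> borel_measurable (lebesgue_d d)"
  define I where "I = {..<d} - {i}"
  have I: "{..<d} = insert i I" "i \<notin> I" "finite I"
    using i unfolding I_def by auto
  have L: "lebesgue_d d = PiM (insert i I) (\<lambda>_. lborel)"
    unfolding lebesgue_d_def I(1) ..
  have fT: "(\<lambda>y. f (y(i := a * y i + g y))) \<in> borel_measurable (PiM (insert i I) (\<lambda>_. lborel))"
    using measurable_comp[OF T f] unfolding L comp_def .
  have inner: "(\<integral>\<^sup>+u. f (x(i := a * u + g (x(i := u)))) \<partial>lborel) = (\<integral>\<^sup>+u. f (x(i := u)) \<partial>lborel)"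
    if x: "x \<in> space (PiM I (\<lambda>_. lborel :: real measure))" for x
  proof -
    have "(\<lambda>u. f (x(i := u))) \<in> borel_measurable borel"
      using measurable_comp[OF measurable_component_update[OF x I(2)] f[unfolded L]]
      by (simp add: comp_def)
    then have "(\<integral>\<^sup>+u. f (x(i := u)) \<partial>lborel) = \<bar>a\<bar> * (\<integral>\<^sup>+u. f (x(i := g x + a * u)) \<partial>lborel)"
      using a by (intro nn_integral_real_affine) auto
    then show ?thesis
      using a g_indep[of x] by (simp add: add.commute)
  qed
  have "(\<integral>\<^sup>+y. f (y(i := a * y i + g y)) \<partial>lebesgue_d d) =
      (\<integral>\<^sup>+x. (\<integral>\<^sup>+u. f (x(i := a * u + g (x(i := u)))) \<partial>lborel) \<partial>PiM I (\<lambda>_. lborel))"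
    unfolding L using product_nn_integral_insert[OF I(3,2) fT] by simp
  also have "\<dots> = (\<integral>\<^sup>+x. (\<integral>\<^sup>+u. f (x(i := u)) \<partial>lborel) \<partial>PiM I (\<lambda>_. lborel))"
    by (intro nn_integral_cong inner)
  also have "\<dots> = (\<integral>\<^sup>+y. f y \<partial>lebesgue_d d)"
    unfolding L by (rule product_nn_integral_insert[OF I(3,2) f[unfolded L], symmetric])
  finally show "(\<integral>\<^sup>+y. f (y(i := a * y i + g y)) \<partial>lebesgue_d d) = (\<integral>\<^sup>+y. f y \<partial>lebesgue_d d)" .
qed

lemma volume_preserving_d_shear:
  assumes "i < d" "j < d" "i \<noteq> j"
  shows "volume_preserving_d d (\<lambda>y. y(i := y i + b * y j))"
  using volume_preserving_d_update_affine[of i d 1 "\<lambda>y. b * y j"] assms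
  unfolding lebesgue_d_def by simp

lemma sets_unit_ball_d_Collect:
  assumes "f \<in> borel_measurable (lebesgue_d d)" "C \<in> sets borel"
  shows "{y \<in> unit_ball_d d. f y \<in> C} \<in> sets (lebesgue_d d)"
proof -
  have "{y \<in> unit_ball_d d. f y \<in> C} = unit_ball_d d \<inter> (f -` C \<inter> space (lebesgue_d d))"
    unfolding unit_ball_d_def by auto
  then show ?thesis
    using assms by (simp add: sets.Int measurable_sets)
qed

lemma inner_d_measurable [measurable]: "(\<lambda>y. inner_d d x y) \<in> borel_measurable (lebesgue_d d)"
  unfolding inner_d_def lebesgue_d_def by measurable

definition orthogonal_map_d :: "nat \<Rightarrow> ((nat \<Rightarrow> real) \<Rightarrow> (nat \<Rightarrow> real)) \<Rightarrow> bool" where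
  "orthogonal_map_d d T \<longleftrightarrow> volume_preserving_d d T \<and>
     (\<forall>y\<in>space (lebesgue_d d). \<forall>z\<in>space (lebesgue_d d). inner_d d (T y) (T z) = inner_d d y z)"

lemma orthogonal_map_d_space:
  "orthogonal_map_d d T \<Longrightarrow> y \<in> space (lebesgue_d d) \<Longrightarrow> T y \<in> space (lebesgue_d d)"
  unfolding orthogonal_map_d_def volume_preserving_d_def by (auto dest: measurable_space)

lemma orthogonal_map_d_inner:
  "orthogonal_map_d d T \<Longrightarrow> y \<in> space (lebesgue_d d) \<Longrightarrow> z \<in> space (lebesgue_d d) \<Longrightarrow>
    inner_d d (T y) (T z) = inner_d d y z"
  unfolding orthogonal_map_d_def by blast

lemma orthogonal_map_d_id: "orthogonal_map_d d (\<lambda>y. y)"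
  unfolding orthogonal_map_d_def volume_preserving_d_def by (simp add: distr_id2)

lemma orthogonal_map_d_comp:
  assumes "orthogonal_map_d d T" "orthogonal_map_d d S"
  shows "orthogonal_map_d d (\<lambda>y. S (T y))"
  using assms volume_preserving_d_comp orthogonal_map_d_space
  unfolding orthogonal_map_d_def by (metis (no_types, lifting))

lemma orthogonal_map_d_reflect:
  assumes "i < d"
  shows "orthogonal_map_d d (\<lambda>y. y(i := - y i))"
  unfolding orthogonal_map_d_def
proof
  show "volume_preserving_d d (\<lambda>y. y(i := - y i))"
    using volume_preserving_d_update_affine[of i d "-1" "\<lambda>_. 0"] assms by simp
  show "\<forall>y\<in>space (lebesgue_d d). \<forall>z\<in>space (lebesgue_d d). inner_d d (y(i := - y i)) (z(i := - z i)) = inner_d d y z"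
    unfolding inner_d_def by (auto intro!: sum.cong)
qed

definition plane_rotation :: "nat \<Rightarrow> nat \<Rightarrow> real \<Rightarrow> real \<Rightarrow> (nat \<Rightarrow> real) \<Rightarrow> (nat \<Rightarrow> real)" where
  "plane_rotation i j c s y = y(i := c * y i - s * y j, j := s * y i + c * y j)"

lemma inner_d_split_pair:
  assumes "i < d" "j < d" "i \<noteq> j"
  shows "inner_d d u v = u i * v i + u j * v j + (\<Sum>k\<in>{..<d} - {i} - {j}. u k * v k)"
  unfolding inner_d_def using assms
  by (simp add: sum.remove[of "{..<d}" i] sum.remove[of "{..<d} - {i}" j] algebra_simps)

lemma inner_d_plane_rotation:
  assumes "i < d" "j < d" "i \<noteq> j" "c\<^sup>2 + s\<^sup>2 = 1"
  shows "inner_d d (plane_rotation i j c s y) (plane_rotation i j c s z) = inner_d d y z"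
proof -
  have "(c * y i - s * y j) * (c * z i - s * z j) + (s * y i + c * y j) * (s * z i + c * z j) =
      (c\<^sup>2 + s\<^sup>2) * (y i * z i + y j * z j)"
    by (simp add: algebra_simps power2_eq_square)
  moreover have "(\<Sum>k\<in>{..<d} - {i} - {j}. plane_rotation i j c s y k * plane_rotation i j c s z k) =
      (\<Sum>k\<in>{..<d} - {i} - {j}. y k * z k)"
    by (intro sum.cong) (auto simp: plane_rotation_def)
  ultimately show ?thesis
    using assms inner_d_split_pair[OF assms(1-3)] by (simp add: plane_rotation_def)
qed

text \<open>A rotation by the angle \<open>\<theta>\<close> is the product of three shears with parameters
  \<open>-tan (\<theta>/2)\<close>, \<open>sin \<theta>\<close>, \<open>-tan (\<theta>/2)\<close>; here \<open>t = s / (1 + c) = tan (\<theta>/2)\<close>.\<close>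

lemma orthogonal_map_d_plane_rotation:
  assumes ij: "i < d" "j < d" "i \<noteq> j" and cs: "c\<^sup>2 + s\<^sup>2 = 1" "c \<noteq> -1"
  shows "orthogonal_map_d d (plane_rotation i j c s)"
proof -
  define t where "t = s / (1 + c)"
  have "1 + c \<noteq> 0"
    using cs(2) by linarith
  then have t1: "t * (1 + c) = s"
    by (simp add: t_def)
  have "t * s * (1 + c) = (1 - c) * (1 + c)"
    using t1 cs(1) by (simp add: algebra_simps power2_eq_square)
  then have ts: "t * s = 1 - c"
    using \<open>1 + c \<noteq> 0\<close> by simp
  have "2 * t - s * t * t = t * (2 - t * s)"
    by (simp add: algebra_simps)
  then have tt: "2 * t - s * t * t = s"
    using ts t1 by simp
  define X where "X y = y(i := y i + (- t) * y j)" for y :: "nat \<Rightarrow> real"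
  define Y where "Y y = y(j := y j + s * y i)" for y :: "nat \<Rightarrow> real"
  have shears: "plane_rotation i j c s = (\<lambda>y. X (Y (X y)))"
  proof (intro ext)
    fix y k
    have "y i - t * y j - t * (y j + s * (y i - t * y j)) = (1 - t * s) * y i - (2 * t - s * t * t) * y j"
         "y j + s * (y i - t * y j) = s * y i + (1 - t * s) * y j"
      by (simp_all add: algebra_simps)
    then show "plane_rotation i j c s y k = X (Y (X y)) k"
      unfolding plane_rotation_def X_def Y_def using ij(3) ts tt by auto
  qed
  have "volume_preserving_d d X" "volume_preserving_d d Y"
    unfolding X_def Y_def using ij volume_preserving_d_shear[of i d j "- t"] volume_preserving_d_shear[of j d i s]
    by auto
  then have "volume_preserving_d d (plane_rotation i j c s)"
    unfolding shears using volume_preserving_d_comp by blast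
  then show ?thesis
    unfolding orthogonal_map_d_def using inner_d_plane_rotation[OF ij cs(1)] by blast
qed

lemma exists_orthogonal_map_d_vanishing_below:
  assumes x: "x \<in> space (lebesgue_d (Suc n))" and "m \<le> n"
  shows "\<exists>T. orthogonal_map_d (Suc n) T \<and> (\<forall>k<m. T x k = 0)"
  using \<open>m \<le> n\<close>
proof (induction m)
  case 0
  show ?case using orthogonal_map_d_id by blast
next
  case (Suc m)
  then obtain T where T: "orthogonal_map_d (Suc n) T" "\<forall>k<m. T x k = 0" and "m < n"
    by auto
  define a where "a = T x n"
  define b where "b = T x m"
  show ?case
  proof (cases "b = 0")
    case True
    then show ?thesis
      using T unfolding b_def by (auto simp: less_Suc_eq)
  next
    case False
    define r where "r = sqrt (a\<^sup>2 + b\<^sup>2)"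
    have "0 < r" "r\<^sup>2 = a\<^sup>2 + b\<^sup>2"
      using False unfolding r_def by (auto simp: add_nonneg_pos)
    define c where "c = a / r"
    define s where "s = - b / r"
    have cs: "c\<^sup>2 + s\<^sup>2 = 1"
      using False \<open>0 < r\<close> \<open>r\<^sup>2 = a\<^sup>2 + b\<^sup>2\<close> unfolding c_def s_def
      by (simp add: power_divide flip: add_divide_distrib)
    have "c \<noteq> -1"
      using cs False \<open>0 < r\<close> unfolding s_def by auto
    then have R: "orthogonal_map_d (Suc n) (plane_rotation n m c s)"
      using \<open>m < n\<close> cs by (intro orthogonal_map_d_plane_rotation) auto
    have "s * a + c * b = 0"
      unfolding s_def c_def using \<open>0 < r\<close> by (simp add: field_simps)
    then have "\<forall>k<Suc m. plane_rotation n m c s (T x) k = 0"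
      using T(2) \<open>m < n\<close> unfolding plane_rotation_def a_def b_def by (auto simp: less_Suc_eq)
    then show ?thesis
      using orthogonal_map_d_comp[OF T(1) R] by blast
  qed
qed

lemma exists_orthogonal_map_d_to_axis:
  assumes x: "x \<in> space (lebesgue_d (Suc n))"
  obtains T where "orthogonal_map_d (Suc n) T" "\<And>k. k < n \<Longrightarrow> T x k = 0" "T x n = enorm_d (Suc n) x"
proof -
  obtain T where T: "orthogonal_map_d (Suc n) T" "\<forall>k<n. T x k = 0"
    using exists_orthogonal_map_d_vanishing_below[OF x order.refl] by blast
  have "inner_d (Suc n) (T x) (T x) = (T x n)\<^sup>2"
    unfolding inner_d_def using T(2) by (simp add: power2_eq_square)
  then have norm: "enorm_d (Suc n) x = \<bar>T x n\<bar>"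
    using orthogonal_map_d_inner[OF T(1) x x] by (simp add: enorm_d_eq_sqrt_inner_d)
  show ?thesis
  proof (cases "0 \<le> T x n")
    case True
    then show ?thesis using that T norm by simp
  next
    case False
    have "orthogonal_map_d (Suc n) (\<lambda>y. (T y)(n := - T y n))"
      using orthogonal_map_d_comp[OF T(1) orthogonal_map_d_reflect] by simp
    then show ?thesis
      using that T norm False by simp
  qed
qed

lemma emeasure_unit_ball_d_inner_d_in:
  assumes x: "x \<in> space (lebesgue_d (Suc n))" and C: "C \<in> sets borel"
  shows "emeasure (lebesgue_d (Suc n)) {y \<in> unit_ball_d (Suc n). inner_d (Suc n) x y \<in> C} =
         emeasure (lebesgue_d (Suc n)) {y \<in> unit_ball_d (Suc n). enorm_d (Suc n) x * y n \<in> C}"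
proof -
  obtain T where T: "orthogonal_map_d (Suc n) T" "\<And>k. k < n \<Longrightarrow> T x k = 0"
      "T x n = enorm_d (Suc n) x"
    using exists_orthogonal_map_d_to_axis[OF x] by blast
  define S where "S = {y \<in> unit_ball_d (Suc n). enorm_d (Suc n) x * y n \<in> C}"
  have "S \<in> sets (lebesgue_d (Suc n))"
    unfolding S_def using C
    by (intro sets_unit_ball_d_Collect borel_measurable_times measurable_const
        measurable_component_lebesgue_d) auto
  have "enorm_d (Suc n) x * T y n = inner_d (Suc n) x y" if "y \<in> space (lebesgue_d (Suc n))" for y
  proof -
    have "inner_d (Suc n) (T x) (T y) = enorm_d (Suc n) x * T y n"
      unfolding inner_d_def using T(2,3) by simp
    then show ?thesis
      using orthogonal_map_d_inner[OF T(1) x that] by simp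
  qed
  then have "T -` S \<inter> space (lebesgue_d (Suc n)) = {y \<in> unit_ball_d (Suc n). inner_d (Suc n) x y \<in> C}"
    unfolding S_def mem_unit_ball_d_iff
    using orthogonal_map_d_space[OF T(1)] orthogonal_map_d_inner[OF T(1)] by auto
  moreover have "volume_preserving_d (Suc n) T"
    using T(1) unfolding orthogonal_map_d_def by simp
  ultimately show ?thesis
    using emeasure_vimage_volume_preserving_d[of "Suc n" T S] \<open>S \<in> sets (lebesgue_d (Suc n))\<close>
    unfolding S_def by simp
qed

section \<open>The volume of the lens\<close>

lemma lborel_distr_reflect: "distr lborel borel (\<lambda>u. a - u) = (lborel :: real measure)"
  using lborel_real_affine[of "-1" a] by (simp add: density_1 one_ennreal_def[symmetric])

definition point_reflection_d :: "nat \<Rightarrow> (nat \<Rightarrow> real) \<Rightarrow> (nat \<Rightarrow> real) \<Rightarrow> (nat \<Rightarrow> real)" where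
  "point_reflection_d d x y = (\<lambda>i\<in>{..<d}. x i - y i)"

lemma volume_preserving_d_point_reflection: "volume_preserving_d d (point_reflection_d d x)"
proof -
  interpret product_sigma_finite "\<lambda>_::nat. lborel :: real measure"
    by (rule product_sigma_finite_lborel)
  have T: "point_reflection_d d x \<in> lebesgue_d d \<rightarrow>\<^sub>M lebesgue_d d"
    unfolding point_reflection_d_def lebesgue_d_def by (intro measurable_restrict) auto
  have "distr (lebesgue_d d) (lebesgue_d d) (point_reflection_d d x) = lebesgue_d d"
    unfolding lebesgue_d_def
  proof (rule PiM_eqI)
    fix A assume A: "\<And>i. i \<in> {..<d} \<Longrightarrow> A i \<in> sets (lborel :: real measure)"
    have "point_reflection_d d x -` PiE {..<d} A \<inter> space (PiM {..<d} (\<lambda>_. lborel)) =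
        PiE {..<d} (\<lambda>i. (\<lambda>u. x i - u) -` A i)"
      unfolding point_reflection_d_def by (auto simp: space_PiM PiE_def Pi_def extensional_def)
    moreover have sets: "(\<lambda>u. x i - u) -` A i \<in> sets lborel" if "i < d" for i
      using measurable_sets_borel[of "\<lambda>u. x i - u" borel "A i"] A[of i] that by simp
    moreover have "PiE {..<d} A \<in> sets (PiM {..<d} (\<lambda>_. lborel))"
      using A by (intro sets_PiM_I_finite) auto
    ultimately have "emeasure (distr (PiM {..<d} (\<lambda>_. lborel)) (PiM {..<d} (\<lambda>_. lborel))
        (point_reflection_d d x)) (PiE {..<d} A) =
        emeasure (PiM {..<d} (\<lambda>_. lborel)) (PiE {..<d} (\<lambda>i. (\<lambda>u. x i - u) -` A i))"
      using T unfolding lebesgue_d_def by (simp add: emeasure_distr)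
    also have "\<dots> = (\<Prod>i\<in>{..<d}. emeasure lborel ((\<lambda>u. x i - u) -` A i))"
      using sets by (intro emeasure_PiM) auto
    also have "\<dots> = (\<Prod>i\<in>{..<d}. emeasure lborel (A i))"
      using A emeasure_distr[of "\<lambda>u. x _ - u" lborel borel]
      by (intro prod.cong) (auto simp: lborel_distr_reflect)
    finally show "emeasure (distr (PiM {..<d} (\<lambda>_. lborel)) (PiM {..<d} (\<lambda>_. lborel))
        (point_reflection_d d x)) (PiE {..<d} A) = (\<Prod>i\<in>{..<d}. emeasure lborel (A i))" .
  qed simp_all
  with T show ?thesis
    unfolding volume_preserving_d_def by simp
qed

lemma inner_d_point_reflection:
  shows "inner_d d z (point_reflection_d d x y) = inner_d d z x - inner_d d z y"
    and "inner_d d (point_reflection_d d x y) (point_reflection_d d x y) =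
      inner_d d x x - 2 * inner_d d x y + inner_d d y y"
proof -
  show "inner_d d z (point_reflection_d d x y) = inner_d d z x - inner_d d z y"
    using inner_d_cong[of d z z "point_reflection_d d x y" "\<lambda>i. x i - y i"]
    by (simp add: point_reflection_d_def inner_d_diff_right)
  show "inner_d d (point_reflection_d d x y) (point_reflection_d d x y) =
      inner_d d x x - 2 * inner_d d x y + inner_d d y y"
    using inner_d_cong[of d "point_reflection_d d x y" "\<lambda>i. x i - y i"]
    by (simp add: point_reflection_d_def inner_d_diff_diff)
qed

text \<open>The part of the lens beyond the bisecting hyperplane \<open>{y. \<langle>y, x\<rangle> = \<bar>x\<bar>\<^sup>2 / 2}\<close>
  is a cap of the ball; the part before it is the image of the open cap beyond it
  under the point reflection in \<open>x / 2\<close>.\<close>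

lemma emeasure_lens_eq_caps:
  assumes x: "x \<in> unit_ball_d d"
  defines "r \<equiv> inner_d d x x"
  shows "emeasure (lebesgue_d d) {y \<in> unit_ball_d d. enorm_d d (\<lambda>i. x i - y i) \<le> 1} =
    emeasure (lebesgue_d d) {y \<in> unit_ball_d d. inner_d d x y \<in> {r / 2..}} +
    emeasure (lebesgue_d d) {y \<in> unit_ball_d d. inner_d d x y \<in> {r / 2<..}}"
proof -
  let ?L = "lebesgue_d d" and ?B = "unit_ball_d d"
  define S1 where "S1 = {y \<in> ?B. inner_d d x y \<in> {r / 2..}}"
  define S2 where "S2 = {y \<in> ?B. enorm_d d (\<lambda>i. x i - y i) \<le> 1 \<and> inner_d d x y < r / 2}"
  define S2' where "S2' = {y \<in> ?B. inner_d d x y \<in> {r / 2<..}}"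
  have dist: "enorm_d d (\<lambda>i. x i - y i) \<le> 1 \<longleftrightarrow> r - 2 * inner_d d x y + inner_d d y y \<le> 1" for y
    unfolding enorm_d_eq_sqrt_inner_d inner_d_diff_diff r_def by simp
  have S2': "S2' \<in> sets ?L"
    unfolding S2'_def by (intro sets_unit_ball_d_Collect inner_d_measurable) simp
  have pre: "point_reflection_d d x -` S2' \<inter> space ?L = S2"
  proof -
    have "point_reflection_d d x y \<in> space ?L" for y
      by (simp add: point_reflection_d_def space_lebesgue_d)
    then show ?thesis
      unfolding S2_def S2'_def dist mem_unit_ball_d_iff
      by (auto simp: inner_d_point_reflection(1)[of d x x] inner_d_point_reflection(2) r_def)
  qed
  note refl = volume_preserving_d_point_reflection[of d x]
  have S2: "S2 \<in> sets ?L" "emeasure ?L S2 = emeasure ?L S2'"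
    unfolding pre[symmetric] using refl S2'
    by (auto intro: measurable_sets emeasure_vimage_volume_preserving_d simp: volume_preserving_d_def)
  have S1: "S1 \<in> sets ?L"
    unfolding S1_def by (intro sets_unit_ball_d_Collect inner_d_measurable) simp
  have "{y \<in> ?B. enorm_d d (\<lambda>i. x i - y i) \<le> 1} = S1 \<union> S2" "S1 \<inter> S2 = {}"
    unfolding S1_def S2_def dist by (auto simp: mem_unit_ball_d_iff)
  then show ?thesis
    using plus_emeasure[OF S1 S2(1)] S2(2) unfolding S1_def S2'_def by simp
qed

lemma emeasure_section_unit_ball_d:
  assumes "t \<noteq> -1" "t \<noteq> 1"
  shows "emeasure (lebesgue_d n) {x \<in> space (lebesgue_d n). inner_d n x x + t\<^sup>2 \<le> 1} =
    indicator {-1<..<1} t * ennreal (unit_ball_vol (real n) * slice_profile n t)"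
proof (cases "\<bar>t\<bar> < 1")
  case True
  then have "0 < 1 - t\<^sup>2"
    by (simp add: abs_square_less_1)
  moreover have "inner_d n x x + t\<^sup>2 \<le> 1 \<longleftrightarrow> sqrt (\<Sum>i\<in>{..<n}. (x i)\<^sup>2) \<le> sqrt (1 - t\<^sup>2)" for x
    unfolding inner_d_def by (simp add: power2_eq_square le_diff_eq)
  ultimately have "emeasure (lebesgue_d n) {x \<in> space (lebesgue_d n). inner_d n x x + t\<^sup>2 \<le> 1} =
      ennreal (unit_ball_vol (real n) * slice_profile n t)"
    using emeasure_cball_aux[of "{..<n}" "sqrt (1 - t\<^sup>2)"]
    by (simp add: lebesgue_d_def slice_profile_def Collect_conj_eq Int_commute)
  then show ?thesis
    using True by (simp add: abs_less_iff)
next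
  case False
  then have "1 < t\<^sup>2"
    using assms abs_square_le_1[of t] by auto
  then have "\<not> inner_d n x x + t\<^sup>2 \<le> 1" for x
    using sum_nonneg[of "{..<n}" "\<lambda>i. x i * x i"] unfolding inner_d_def by force
  then show ?thesis
    using False by (auto simp: abs_less_iff indicator_def)
qed

lemma indicator_unit_ball_d_Suc_update:
  assumes x: "x \<in> space (lebesgue_d n)"
  shows "indicator {y \<in> unit_ball_d (Suc n). y n \<in> A} (x(n := t)) =
    (indicator A t * indicator {x \<in> space (lebesgue_d n). inner_d n x x + t\<^sup>2 \<le> 1} x :: ennreal)"
proof -
  have "(\<Sum>i<n. (x(n := t)) i * (x(n := t)) i) = (\<Sum>i<n. x i * x i)"
    by (intro sum.cong) auto
  then have "inner_d (Suc n) (x(n := t)) (x(n := t)) = inner_d n x x + t\<^sup>2"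
    unfolding inner_d_def by (simp add: power2_eq_square)
  moreover have "x(n := t) \<in> space (lebesgue_d (Suc n))"
    using x by (auto simp: space_lebesgue_d PiE_def extensional_def)
  ultimately show ?thesis
    using x unfolding mem_unit_ball_d_iff by (auto simp: indicator_def)
qed

lemma emeasure_unit_ball_d_coordinate_in:
  assumes A [measurable]: "A \<in> sets borel"
  shows "emeasure (lebesgue_d (Suc n)) {y \<in> unit_ball_d (Suc n). y n \<in> A} =
    unit_ball_vol (real n) * (\<integral>\<^sup>+t. indicator (A \<inter> {-1<..<1}) t * ennreal (slice_profile n t) \<partial>lborel)"
proof -
  interpret product_sigma_finite "\<lambda>_::nat. lborel :: real measure"
    by (rule product_sigma_finite_lborel)
  let ?L = "lebesgue_d n" and ?S = "{y \<in> unit_ball_d (Suc n). y n \<in> A}"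
  have L: "lebesgue_d (Suc n) = PiM (insert n {..<n}) (\<lambda>_. lborel)"
    unfolding lebesgue_d_def lessThan_Suc ..
  have "?S \<in> sets (lebesgue_d (Suc n))"
    using A by (intro sets_unit_ball_d_Collect measurable_component_lebesgue_d) auto
  then have S: "?S \<in> sets (PiM (insert n {..<n}) (\<lambda>_. lborel))"
    unfolding L .
  have "emeasure (lebesgue_d (Suc n)) ?S = (\<integral>\<^sup>+y. indicator ?S y \<partial>PiM (insert n {..<n}) (\<lambda>_. lborel))"
    using S unfolding L by simp
  also have "\<dots> = (\<integral>\<^sup>+t. \<integral>\<^sup>+x. indicator ?S (x(n := t)) \<partial>?L \<partial>lborel)"
    using S unfolding lebesgue_d_def by (subst product_nn_integral_insert_rev) auto
  also have "\<dots> = (\<integral>\<^sup>+t. indicator A t * emeasure ?L {x \<in> space ?L. inner_d n x x + t\<^sup>2 \<le> 1} \<partial>lborel)"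
  proof (intro nn_integral_cong)
    fix t :: real
    have "{x \<in> space ?L. inner_d n x x + t\<^sup>2 \<le> 1} \<in> sets ?L"
      unfolding inner_d_def lebesgue_d_def by measurable
    then show "(\<integral>\<^sup>+x. indicator ?S (x(n := t)) \<partial>?L) =
        indicator A t * emeasure ?L {x \<in> space ?L. inner_d n x x + t\<^sup>2 \<le> 1}"
      by (simp add: indicator_unit_ball_d_Suc_update nn_integral_cmult_indicator cong: nn_integral_cong)
  qed
  also have "\<dots> = (\<integral>\<^sup>+t. unit_ball_vol (real n) *
      (indicator (A \<inter> {-1<..<1}) t * ennreal (slice_profile n t)) \<partial>lborel)"
  proof (intro nn_integral_cong_AE)
    have "AE t in lborel. t \<notin> {-1, 1}"
      by (intro AE_not_in countable_imp_null_set_lborel) auto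
    then show "AE t in lborel. indicator A t * emeasure ?L {x \<in> space ?L. inner_d n x x + t\<^sup>2 \<le> 1} =
        unit_ball_vol (real n) * (indicator (A \<inter> {-1<..<1}) t * ennreal (slice_profile n t))"
      by eventually_elim (auto simp: emeasure_section_unit_ball_d ennreal_mult' indicator_def)
  qed
  also have "\<dots> = unit_ball_vol (real n) *
      (\<integral>\<^sup>+t. indicator (A \<inter> {-1<..<1}) t * ennreal (slice_profile n t) \<partial>lborel)"
    by (intro nn_integral_cmult) measurable
  finally show ?thesis .
qed

lemma emeasure_unit_ball_d_cap:
  assumes "-1 \<le> a" and A: "A \<in> sets borel" "{a<..} \<subseteq> A" "A \<subseteq> {a..}"
  shows "emeasure (lebesgue_d (Suc n)) {y \<in> unit_ball_d (Suc n). y n \<in> A} =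
    ennreal (unit_ball_vol (real n) * cap_integral n a)"
proof -
  have "AE t in lborel. t \<notin> {-1, 1, a}"
    by (intro AE_not_in countable_imp_null_set_lborel) auto
  then have "AE t in lborel. indicator (A \<inter> {-1<..<1}) t * ennreal (slice_profile n t) =
      ennreal (slice_profile n t) * indicator {a..1} t"
  proof eventually_elim
    case (elim t)
    then show ?case
      using A \<open>-1 \<le> a\<close> by (auto simp: indicator_def subset_eq)
  qed
  then have "(\<integral>\<^sup>+t. indicator (A \<inter> {-1<..<1}) t * ennreal (slice_profile n t) \<partial>lborel) =
      (\<integral>\<^sup>+t. ennreal (slice_profile n t) * indicator {a..1} t \<partial>lborel)"
    by (rule nn_integral_cong_AE)
  also have "\<dots> = ennreal (cap_integral n a)"
    using \<open>-1 \<le> a\<close>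
    by (intro nn_integral_has_integral_lebesgue' has_integral_cap_integral slice_profile_nonneg) auto
  finally show ?thesis
    using A(1) \<open>-1 \<le> a\<close> by (simp add: emeasure_unit_ball_d_coordinate_in ennreal_mult')
qed

lemma emeasure_unit_ball_d_inner_d_cap:
  assumes x: "x \<in> space (lebesgue_d (Suc n))" "0 < enorm_d (Suc n) x" and "-1 \<le> a"
    and C: "C \<in> sets borel" "{enorm_d (Suc n) x * a<..} \<subseteq> C" "C \<subseteq> {enorm_d (Suc n) x * a..}"
  shows "emeasure (lebesgue_d (Suc n)) {y \<in> unit_ball_d (Suc n). inner_d (Suc n) x y \<in> C} =
    ennreal (unit_ball_vol (real n) * cap_integral n a)"
proof -
  define e where "e = enorm_d (Suc n) x"
  have "emeasure (lebesgue_d (Suc n)) {y \<in> unit_ball_d (Suc n). inner_d (Suc n) x y \<in> C} =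
      emeasure (lebesgue_d (Suc n)) {y \<in> unit_ball_d (Suc n). y n \<in> (\<lambda>t. e * t) -` C}"
    using emeasure_unit_ball_d_inner_d_in[OF x(1) C(1)] by (simp add: e_def)
  also have "\<dots> = ennreal (unit_ball_vol (real n) * cap_integral n a)"
  proof (rule emeasure_unit_ball_d_cap)
    show "(\<lambda>t. e * t) -` C \<in> sets borel"
      using measurable_sets_borel[of "\<lambda>t. e * t" borel C] C(1) by simp
    show "{a<..} \<subseteq> (\<lambda>t. e * t) -` C" "(\<lambda>t. e * t) -` C \<subseteq> {a..}"
      using C(2,3) x(2) unfolding e_def[symmetric] by (auto simp: subset_eq)
  qed fact
  finally show ?thesis .
qed

text \<open>The volume of the intersection of two unit balls of \<open>\<real>\<^sup>n\<^sup>+\<^sup>1\<close> whose centres are at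
  distance \<open>r\<close>; note the shift of dimension.\<close>

definition lens_volume :: "nat \<Rightarrow> real \<Rightarrow> real" where
  "lens_volume n r = 2 * unit_ball_vol (real n) * cap_integral n (r / 2)"

lemma lens_volume_nonneg: "0 \<le> r \<Longrightarrow> 0 \<le> lens_volume n r"
  unfolding lens_volume_def by (simp add: cap_integral_nonneg)

lemma lens_volume_measurable [measurable]: "lens_volume n \<in> borel_measurable borel"
  unfolding lens_volume_def by measurable

lemma emeasure_lens:
  assumes x: "x \<in> unit_ball_d (Suc n)" and "0 < enorm_d (Suc n) x"
  shows "emeasure (lebesgue_d (Suc n)) {y \<in> unit_ball_d (Suc n). enorm_d (Suc n) (\<lambda>i. x i - y i) \<le> 1} =
    ennreal (lens_volume n (enorm_d (Suc n) x))"
proof -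
  let ?L = "lebesgue_d (Suc n)" and ?B = "unit_ball_d (Suc n)" and ?e = "enorm_d (Suc n) x"
  have "x \<in> space ?L" "?e \<le> 1"
    using x unfolding unit_ball_d_def by auto
  have r: "inner_d (Suc n) x x / 2 = ?e * (?e / 2)"
    unfolding enorm_d_eq_sqrt_inner_d inner_d_def by (simp add: sum_nonneg)
  have "-1 \<le> ?e / 2"
    using enorm_d_nonneg[of "Suc n" x] by simp
  note cap = emeasure_unit_ball_d_inner_d_cap[OF \<open>x \<in> space ?L\<close> assms(2) this]
  have "emeasure ?L {y \<in> ?B. inner_d (Suc n) x y \<in> {?e * (?e / 2)..}} =
      ennreal (unit_ball_vol (real n) * cap_integral n (?e / 2))"
    by (rule cap) auto
  moreover have "emeasure ?L {y \<in> ?B. inner_d (Suc n) x y \<in> {?e * (?e / 2)<..}} =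
      ennreal (unit_ball_vol (real n) * cap_integral n (?e / 2))"
    by (rule cap) auto
  ultimately have "emeasure ?L {y \<in> ?B. enorm_d (Suc n) (\<lambda>i. x i - y i) \<le> 1} =
      ennreal (unit_ball_vol (real n) * cap_integral n (?e / 2)) +
      ennreal (unit_ball_vol (real n) * cap_integral n (?e / 2))"
    using emeasure_lens_eq_caps[OF x] unfolding r by (simp only:)
  then show ?thesis
    unfolding lens_volume_def using \<open>-1 \<le> ?e / 2\<close>
    by (simp add: cap_integral_nonneg ennreal_plus[symmetric] algebra_simps del: ennreal_plus)
qed

section \<open>The distribution of the norm\<close>

lemma emeasure_lebesgue_d_norm_le:
  assumes "0 \<le> m"
  shows "emeasure (lebesgue_d (Suc n)) {x \<in> space (lebesgue_d (Suc n)). enorm_d (Suc n) x \<le> m} =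
    ennreal (unit_ball_vol (real (Suc n)) * m ^ Suc n)"
proof (cases "m = 0")
  case True
  have "x i = 0" if "x \<in> space (lebesgue_d (Suc n))" "enorm_d (Suc n) x \<le> 0" "i < Suc n" for x i
  proof -
    have "(\<Sum>i<Suc n. (x i)\<^sup>2) = 0"
      using that(2) by (simp add: enorm_d_def sum_nonneg order.antisym)
    then show ?thesis
      using that(3) by (subst (asm) sum_nonneg_eq_0_iff) auto
  qed
  then have "{x \<in> space (lebesgue_d (Suc n)). enorm_d (Suc n) x \<le> m} = PiE {..<Suc n} (\<lambda>_. {0})"
    using True by (auto simp: space_lebesgue_d PiE_def Pi_def extensional_def enorm_d_def)
  moreover have "emeasure (lebesgue_d (Suc n)) (PiE {..<Suc n} (\<lambda>_. {0})) = 0"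
  proof -
    interpret product_sigma_finite "\<lambda>_::nat. lborel :: real measure"
      by (rule product_sigma_finite_lborel)
    show ?thesis
      unfolding lebesgue_d_def by (subst emeasure_PiM) auto
  qed
  ultimately show ?thesis
    using True by simp
next
  case False
  then have "0 < m"
    using assms by simp
  moreover have "{x \<in> space (lebesgue_d (Suc n)). enorm_d (Suc n) x \<le> m} =
      {f. sqrt (\<Sum>i\<in>{..<Suc n}. (f i)\<^sup>2) \<le> m} \<inter> space (PiM {..<Suc n} (\<lambda>_. lborel))"
    unfolding enorm_d_def lebesgue_d_def by auto
  ultimately show ?thesis
    unfolding lebesgue_d_def using emeasure_cball_aux[of "{..<Suc n}" m] by simp
qed

lemma emeasure_unit_ball_d_norm_greater:
  "emeasure (lebesgue_d (Suc n)) {x \<in> unit_ball_d (Suc n). a < enorm_d (Suc n) x} =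
    (if a < 1 then ennreal (unit_ball_vol (real (Suc n)) * (1 - max a 0 ^ Suc n)) else 0)"
proof -
  let ?L = "lebesgue_d (Suc n)" and ?B = "unit_ball_d (Suc n)"
  consider "a < 0" | "0 \<le> a" "a < 1" | "1 \<le> a"
    by linarith
  then show ?thesis
  proof cases
    case 1
    have "{x \<in> ?B. a < enorm_d (Suc n) x} = ?B"
      using order.strict_trans2[OF 1 enorm_d_nonneg] by auto
    then show ?thesis
      using 1 by (simp add: emeasure_unit_ball_d)
  next
    case 2
    have "{x \<in> ?B. a < enorm_d (Suc n) x} = ?B - {x \<in> space ?L. enorm_d (Suc n) x \<le> a}"
      unfolding unit_ball_d_def by auto
    moreover have "{x \<in> space ?L. enorm_d (Suc n) x \<le> a} \<subseteq> ?B"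
      using 2 unfolding unit_ball_d_def by auto
    ultimately show ?thesis
      using 2
      by (simp add: emeasure_Diff emeasure_lebesgue_d_norm_le emeasure_unit_ball_d ennreal_minus
          power_le_one algebra_simps)
  next
    case 3
    then have "{x \<in> ?B. a < enorm_d (Suc n) x} = {}"
      unfolding unit_ball_d_def by auto
    then have "emeasure ?L {x \<in> ?B. a < enorm_d (Suc n) x} = 0"
      by (simp only: emeasure_empty)
    with 3 show ?thesis
      by simp
  qed
qed

definition radial_density :: "nat \<Rightarrow> real \<Rightarrow> ennreal" where
  "radial_density n s = indicator {0..1} s * ennreal (unit_ball_vol (real (Suc n)) * real (Suc n) * s ^ n)"

lemma radial_density_measurable [measurable]: "radial_density n \<in> borel_measurable borel"
  unfolding radial_density_def by measurable

lemma emeasure_radial_density_greater: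
  "emeasure (density lborel (radial_density n)) {a<..} =
    (if a < 1 then ennreal (unit_ball_vol (real (Suc n)) * (1 - max a 0 ^ Suc n)) else 0)"
proof (cases "a < 1")
  case True
  define V where "V = unit_ball_vol (real (Suc n))"
  define m where "m = max a 0"
  have "0 \<le> m" "m \<le> 1"
    using True unfolding m_def by auto
  have "emeasure (density lborel (radial_density n)) {a<..} =
      (\<integral>\<^sup>+s. radial_density n s * indicator {a<..} s \<partial>lborel)"
    by (simp add: emeasure_density)
  also have "\<dots> = (\<integral>\<^sup>+s. ennreal (V * real (Suc n) * s ^ n) * indicator {m..1} s \<partial>lborel)"
    using AE_lborel_singleton[of m]
    by (intro nn_integral_cong_AE, eventually_elim) (auto simp: radial_density_def V_def m_def indicator_def)
  also have "\<dots> = ennreal (V * (1 - m ^ Suc n))"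
  proof -
    have "((\<lambda>s. V * s ^ Suc n) has_real_derivative V * real (Suc n) * s ^ n) (at s)" for s :: real
      by (rule DERIV_cong[OF DERIV_cmult[OF DERIV_power_Suc[OF DERIV_ident]]]) (simp add: algebra_simps)
    then have "((\<lambda>s. V * real (Suc n) * s ^ n) has_integral V * 1 ^ Suc n - V * m ^ Suc n) {m..1}"
      using \<open>m \<le> 1\<close>
      by (intro fundamental_theorem_of_calculus)
        (auto simp: has_real_derivative_iff_has_vector_derivative[symmetric] intro: has_field_derivative_at_within)
    then show ?thesis
      using \<open>0 \<le> m\<close> by (subst nn_integral_has_integral_lebesgue') (auto simp: V_def algebra_simps)
  qed
  finally show ?thesis
    using True unfolding V_def m_def by simp
next
  case False
  have "emeasure (density lborel (radial_density n)) {a<..} =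
      (\<integral>\<^sup>+s. radial_density n s * indicator {a<..} s \<partial>lborel)"
    by (simp add: emeasure_density)
  also have "\<dots> = (\<integral>\<^sup>+s. 0 \<partial>(lborel :: real measure))"
    by (intro nn_integral_cong) (use False in \<open>simp add: radial_density_def indicator_def\<close>)
  finally show ?thesis
    using False by simp
qed

lemma distr_enorm_d_unit_ball_d:
  "distr (density (lebesgue_d (Suc n)) (indicator (unit_ball_d (Suc n)))) borel (enorm_d (Suc n)) =
    density lborel (radial_density n)"
proof (rule measure_eqI_lessThan)
  fix a :: real
  let ?D = "distr (density (lebesgue_d (Suc n)) (indicator (unit_ball_d (Suc n)))) borel (enorm_d (Suc n))"
  have "emeasure ?D {a<..} = emeasure (density (lebesgue_d (Suc n)) (indicator (unit_ball_d (Suc n))))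
      (enorm_d (Suc n) -` {a<..} \<inter> space (lebesgue_d (Suc n)))"
    using emeasure_distr[of "enorm_d (Suc n)" "density (lebesgue_d (Suc n)) (indicator (unit_ball_d (Suc n)))"
        borel "{a<..}"] by simp
  also have "\<dots> = emeasure (lebesgue_d (Suc n))
      (unit_ball_d (Suc n) \<inter> (enorm_d (Suc n) -` {a<..} \<inter> space (lebesgue_d (Suc n))))"
    by (rule emeasure_restricted) auto
  also have "unit_ball_d (Suc n) \<inter> (enorm_d (Suc n) -` {a<..} \<inter> space (lebesgue_d (Suc n))) =
      {x \<in> unit_ball_d (Suc n). a < enorm_d (Suc n) x}"
    unfolding unit_ball_d_def by auto
  finally have "emeasure ?D {a<..} =
      (if a < 1 then ennreal (unit_ball_vol (real (Suc n)) * (1 - max a 0 ^ Suc n)) else 0)"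
    by (simp add: emeasure_unit_ball_d_norm_greater)
  then show "emeasure ?D {a<..} = emeasure (density lborel (radial_density n)) {a<..}"
    and "emeasure ?D {a<..} < \<infinity>"
    by (simp_all add: emeasure_radial_density_greater)
qed simp_all

lemma nn_integral_unit_ball_d_radial:
  assumes [measurable]: "g \<in> borel_measurable borel"
  shows "(\<integral>\<^sup>+x. g (enorm_d (Suc n) x) * indicator (unit_ball_d (Suc n)) x \<partial>lebesgue_d (Suc n)) =
    (\<integral>\<^sup>+s. g s * radial_density n s \<partial>lborel)"
proof -
  have "(\<integral>\<^sup>+x. g (enorm_d (Suc n) x) * indicator (unit_ball_d (Suc n)) x \<partial>lebesgue_d (Suc n)) =
      (\<integral>\<^sup>+s. g s \<partial>distr (density (lebesgue_d (Suc n)) (indicator (unit_ball_d (Suc n)))) borel (enorm_d (Suc n)))"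
    by (simp add: nn_integral_distr nn_integral_density mult.commute)
  also have "\<dots> = (\<integral>\<^sup>+s. g s * radial_density n s \<partial>lborel)"
    by (simp add: distr_enorm_d_unit_ball_d nn_integral_density mult.commute)
  finally show ?thesis .
qed

lemma AE_enorm_d_pos: "AE x in lebesgue_d (Suc n). 0 < enorm_d (Suc n) x"
proof (rule AE_I')
  show "{x \<in> space (lebesgue_d (Suc n)). enorm_d (Suc n) x \<le> 0} \<in> null_sets (lebesgue_d (Suc n))"
    using emeasure_lebesgue_d_norm_le[of 0 n] by (auto simp: null_sets_def)
qed auto

section \<open>The probability \<open>w\<close>\<close>

lemma emeasure_unif_ball_dist_le:
  assumes x: "x \<in> unit_ball_d (Suc n)" "0 < enorm_d (Suc n) x"
  shows "emeasure (unif_ball (Suc n)) {y \<in> space (unif_ball (Suc n)). enorm_d (Suc n) (\<lambda>i. x i - y i) \<le> 1} =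
    ennreal (lens_volume n (enorm_d (Suc n) x) / unit_ball_vol (real (Suc n)))"
proof -
  let ?L = "lebesgue_d (Suc n)" and ?B = "unit_ball_d (Suc n)"
  have "x \<in> space ?L"
    using x unfolding unit_ball_d_def by auto
  then have "(\<lambda>y. enorm_d (Suc n) (\<lambda>i. x i - y i)) \<in> borel_measurable ?L"
    unfolding enorm_d_def lebesgue_d_def by measurable
  then have "{y \<in> space ?L. enorm_d (Suc n) (\<lambda>i. x i - y i) \<le> 1} \<in> sets ?L"
    by measurable
  moreover have "?B \<inter> {y \<in> space ?L. enorm_d (Suc n) (\<lambda>i. x i - y i) \<le> 1} =
      {y \<in> ?B. enorm_d (Suc n) (\<lambda>i. x i - y i) \<le> 1}"
    unfolding unit_ball_d_def by auto
  ultimately show ?thesis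
    using x by (simp add: unif_ball_def emeasure_lens emeasure_unit_ball_d divide_ennreal
        lens_volume_nonneg enorm_d_nonneg)
qed

lemma prob_space_unif_ball: "prob_space (unif_ball d)"
  unfolding unif_ball_def by (intro prob_space_uniform_measure) (simp_all add: emeasure_unit_ball_d)

lemma sets_pair_unif_ball_dist_le:
  "{(x, y) \<in> space (unif_ball d \<Otimes>\<^sub>M unif_ball d). enorm_d d (\<lambda>i. x i - y i) \<le> 1} \<in>
    sets (unif_ball d \<Otimes>\<^sub>M unif_ball d)"
proof -
  have sets_UU: "sets (unif_ball d \<Otimes>\<^sub>M unif_ball d) = sets (lebesgue_d d \<Otimes>\<^sub>M lebesgue_d d)"
    unfolding unif_ball_def by (intro sets_pair_measure_cong) simp_all
  have "(\<lambda>p. enorm_d d (\<lambda>i. fst p i - snd p i)) \<in> borel_measurable (lebesgue_d d \<Otimes>\<^sub>M lebesgue_d d)"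
    unfolding enorm_d_def lebesgue_d_def by measurable
  moreover have "{(x, y) \<in> space (unif_ball d \<Otimes>\<^sub>M unif_ball d). enorm_d d (\<lambda>i. x i - y i) \<le> 1} =
      (\<lambda>p. enorm_d d (\<lambda>i. fst p i - snd p i)) -` {..1} \<inter> space (lebesgue_d d \<Otimes>\<^sub>M lebesgue_d d)"
    unfolding sets_eq_imp_space_eq[OF sets_UU] by auto
  ultimately show ?thesis
    unfolding sets_UU by (simp add: measurable_sets)
qed

lemma emeasure_pair_unif_ball_dist_le:
  "emeasure (unif_ball (Suc n) \<Otimes>\<^sub>M unif_ball (Suc n))
      {(x, y) \<in> space (unif_ball (Suc n) \<Otimes>\<^sub>M unif_ball (Suc n)). enorm_d (Suc n) (\<lambda>i. x i - y i) \<le> 1} =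
    (\<integral>\<^sup>+x. ennreal (lens_volume n (enorm_d (Suc n) x) / unit_ball_vol (real (Suc n))) *
      indicator (unit_ball_d (Suc n)) x \<partial>lebesgue_d (Suc n)) / ennreal (unit_ball_vol (real (Suc n)))"
  (is "emeasure (?U \<Otimes>\<^sub>M ?U) ?W = _")
proof -
  let ?L = "lebesgue_d (Suc n)" and ?B = "unit_ball_d (Suc n)" and ?V = "unit_ball_vol (real (Suc n))"
  have U: "?U = uniform_measure ?L ?B"
    by (simp add: unif_ball_def)
  interpret U: prob_space ?U
    by (rule prob_space_unif_ball)
  have "emeasure (?U \<Otimes>\<^sub>M ?U) ?W = (\<integral>\<^sup>+x. emeasure ?U (Pair x -` ?W) \<partial>?U)"
    by (rule U.emeasure_pair_measure_alt[OF sets_pair_unif_ball_dist_le])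
  also have "\<dots> = (\<integral>\<^sup>+x. ennreal (lens_volume n (enorm_d (Suc n) x) / ?V) \<partial>?U)"
  proof (rule nn_integral_cong_AE)
    have "AE x in ?U. x \<in> ?B \<and> 0 < enorm_d (Suc n) x"
      unfolding U
      by (intro AE_uniform_measureI) (use AE_enorm_d_pos[of n] in \<open>auto elim!: eventually_mono\<close>)
    then show "AE x in ?U. emeasure ?U (Pair x -` ?W) = ennreal (lens_volume n (enorm_d (Suc n) x) / ?V)"
    proof eventually_elim
      case (elim x)
      then have "Pair x -` ?W = {y \<in> space ?U. enorm_d (Suc n) (\<lambda>i. x i - y i) \<le> 1}"
        by (auto simp: space_pair_measure unit_ball_d_def U)
      then show ?case
        using elim by (simp add: emeasure_unif_ball_dist_le)
    qed
  qed
  also have "\<dots> = (\<integral>\<^sup>+x. ennreal (lens_volume n (enorm_d (Suc n) x) / ?V) * indicator ?B x \<partial>?L) / ennreal ?V"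
    unfolding U by (subst nn_integral_uniform_measure) (simp_all add: emeasure_unit_ball_d)
  finally show ?thesis .
qed

lemma nn_integral_lens_volume:
  "(\<integral>\<^sup>+x. ennreal (lens_volume n (enorm_d (Suc n) x) / unit_ball_vol (real (Suc n))) *
      indicator (unit_ball_d (Suc n)) x \<partial>lebesgue_d (Suc n)) =
    ennreal (3 * unit_ball_vol (real n) * cap_integral n (1/2))"
proof -
  let ?V = "unit_ball_vol (real (Suc n))" and ?v = "unit_ball_vol (real n)"
  have "(\<integral>\<^sup>+x. ennreal (lens_volume n (enorm_d (Suc n) x) / ?V) * indicator (unit_ball_d (Suc n)) x
      \<partial>lebesgue_d (Suc n)) = (\<integral>\<^sup>+s. ennreal (lens_volume n s / ?V) * radial_density n s \<partial>lborel)"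
    by (intro nn_integral_unit_ball_d_radial) measurable
  also have "\<dots> = (\<integral>\<^sup>+s. ennreal (2 * ?v * (real (Suc n) * s ^ n * cap_integral n (s / 2))) *
      indicator {0..1} s \<partial>lborel)"
  proof (intro nn_integral_cong)
    fix s :: real
    show "ennreal (lens_volume n s / ?V) * radial_density n s =
        ennreal (2 * ?v * (real (Suc n) * s ^ n * cap_integral n (s / 2))) * indicator {0..1} s"
    proof (cases "s \<in> {0..1}")
      case True
      then have "0 \<le> lens_volume n s / ?V"
        by (simp add: lens_volume_nonneg)
      moreover have "lens_volume n s / ?V * (?V * real (Suc n) * s ^ n) =
          2 * ?v * (real (Suc n) * s ^ n * cap_integral n (s / 2))"
        by (simp add: lens_volume_def field_simps)
      ultimately show ?thesis
        using True unfolding radial_density_def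
        by (metis ennreal_mult' indicator_simps(1) mult_1 mult.right_neutral)
    qed (simp add: radial_density_def)
  qed
  also have "\<dots> = ennreal (2 * ?v * (3 / 2 * cap_integral n (1/2)))"
    by (intro nn_integral_has_integral_lebesgue' has_integral_mult_right has_integral_weighted_cap_integral)
      (auto intro!: mult_nonneg_nonneg cap_integral_nonneg)
  finally show ?thesis
    by (simp add: ac_simps)
qed

lemma w_Suc: "w (Suc n) = 3 / 2 * cap_ratio n"
proof -
  let ?V = "unit_ball_vol (real (Suc n))" and ?v = "unit_ball_vol (real n)"
  have "w (Suc n) = enn2real (ennreal (3 * ?v * cap_integral n (1/2)) / ennreal ?V)"
    unfolding w_def measure_def emeasure_pair_unif_ball_dist_le nn_integral_lens_volume ..
  also have "\<dots> = 3 * ?v * cap_integral n (1/2) / ?V"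
    using cap_integral_nonneg[of "1/2" n] by (simp add: divide_ennreal)
  also have "?V = 2 * ?v * cap_integral n 0"
    by (rule unit_ball_vol_Suc)
  also have "3 * ?v * cap_integral n (1/2) / (2 * ?v * cap_integral n 0) = 3 / 2 * cap_ratio n"
    using cap_integral_pos[of 0 n] by (simp add: cap_ratio_def)
  finally show ?thesis .
qed

theorem lemma1:
  shows "(\<forall>d\<ge>1. w d = 3 / 2 * measure (beta_distr (1/2) ((real d + 1) / 2)) {1/4..})
         \<and> (\<forall>d\<ge>1. w (Suc d) < w d)
         \<and> (w \<longlonglongrightarrow> 0)"
proof (intro conjI allI impI)
  fix d :: nat assume "d \<ge> 1"
  then obtain n where d: "d = Suc n"
    by (cases d) auto
  have "(real d + 1) / 2 = real n / 2 + 1"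
    by (simp add: d field_simps)
  moreover have "sqrt (1/4) = (1/2 :: real)"
    by (rule real_sqrt_unique) (auto simp: power2_eq_square)
  ultimately show "w d = 3 / 2 * measure (beta_distr (1/2) ((real d + 1) / 2)) {1/4..}"
    using measure_beta_distr_tail[of "1/4" n] by (simp only: d w_Suc cap_ratio_def)
next
  fix d :: nat assume "d \<ge> 1"
  then obtain n where d: "d = Suc n"
    by (cases d) auto
  show "w (Suc d) < w d"
    unfolding d w_Suc using cap_ratio_Suc_less[of n] by simp
next
  have "(\<lambda>n. w (Suc n)) \<longlonglongrightarrow> 3 / 2 * 0"
    unfolding w_Suc by (rule tendsto_mult_left[OF cap_ratio_tendsto_zero])
  then show "w \<longlonglongrightarrow> 0"
    by (simp add: filterlim_sequentially_Suc[THEN iffD1])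
qed

end
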